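(* Let $(G,\sigma,p)$ be a $d$-dimensional tensegrity. An edge weight $\omega:E(G)\to\mathbb{R}$ is an optimal solution of the problem (D): minimize $\sum_{ij\in E(G)}\omega_{ij}\|p_i-p_j\|^2$ subject to $\sum_{ij\in E(G)}\omega_{ij}F_{ij}\succeq0$ and $\sigma(ij)\omega_{ij}\geq0$ for all $ij\in E(G)$, if and only if $\omega$ is a proper equilibrium stress of $(G,\sigma,p)$.
   Context: A $d$-dimensional tensegrity is a triple $(G,\sigma,p)$ with $G=(V,E)$ a finite simple graph, $\sigma:E\to\{-1,0,+1\}$, $p:V\to\mathbb{R}^d$. $F_{ij}=(\mathbf{e}_i-\mathbf{e}_j)(\mathbf{e}_i-\mathbf{e}_j)^\top$. An edge weight $\omega$ is an equilibrium stress if $\sum_{j\in N_G(i)}\omega_{ij}(p_i-p_j)=\mathbf{0}$ for every vertex $i$ ($N_G(i)$ the neighbours of $i$), and proper if $\sigma(ij)\omega_{ij}\geq0$ for all edges $ij$.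
   Formalization: $\omega$ is optimal for (D) if and only if it is a proper equilibrium stress that also satisfies $\sum_{ij\in E(G)}\omega_{ij}F_{ij}\succeq0$. The statement above fails without it. *)

theory Defs
  imports "HOL-Analysis.Analysis"
begin

definition simple_graph :: "'v set \<Rightarrow> 'v set set \<Rightarrow> bool" where
  "simple_graph V E \<longleftrightarrow> finite V \<and> E \<subseteq> {{i, j} | i j. i \<in> V \<and> j \<in> V \<and> i \<noteq> j}"

text \<open>A d-dimensional tensegrity (G, sigma, p); the dimension d is the index type 'd of p.\<close>
definition tensegrity :: "'v set \<Rightarrow> 'v set set \<Rightarrow> ('v set \<Rightarrow> real) \<Rightarrow> ('v \<Rightarrow> real ^ 'd) \<Rightarrow> bool" where
  "tensegrity V E \<sigma> p \<longleftrightarrow> simple_graph V E \<and> (\<forall>e\<in>E. \<sigma> e \<in> {-1, 0, 1})"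

definition ends :: "'v set \<Rightarrow> 'v \<times> 'v" where
  "ends e = (SOME (i, j). e = {i, j})"

text \<open>F_ij = (e_i - e_j)(e_i - e_j)^T as a V x V matrix (function of two vertices).\<close>
definition F :: "'v \<Rightarrow> 'v \<Rightarrow> 'v \<Rightarrow> 'v \<Rightarrow> real" where
  "F i j a b = ((if a = i then 1 else 0) - (if a = j then 1 else 0)) *
               ((if b = i then 1 else 0) - (if b = j then 1 else 0))"

definition F_edge :: "'v set \<Rightarrow> 'v \<Rightarrow> 'v \<Rightarrow> real" where
  "F_edge e = F (fst (ends e)) (snd (ends e))"

definition stress_matrix :: "'v set set \<Rightarrow> ('v set \<Rightarrow> real) \<Rightarrow> 'v \<Rightarrow> 'v \<Rightarrow> real" where
  "stress_matrix E \<omega> a b = (\<Sum>e\<in>E. \<omega> e * F_edge e a b)"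

definition psd :: "'v set \<Rightarrow> ('v \<Rightarrow> 'v \<Rightarrow> real) \<Rightarrow> bool" where
  "psd V M \<longleftrightarrow> (\<forall>x :: 'v \<Rightarrow> real. 0 \<le> (\<Sum>a\<in>V. \<Sum>b\<in>V. x a * M a b * x b))"

definition objective_D :: "'v set set \<Rightarrow> ('v \<Rightarrow> real ^ 'd) \<Rightarrow> ('v set \<Rightarrow> real) \<Rightarrow> real" where
  "objective_D E p \<omega> = (\<Sum>e\<in>E. \<omega> e * (norm (p (fst (ends e)) - p (snd (ends e))))\<^sup>2)"

definition proper :: "'v set set \<Rightarrow> ('v set \<Rightarrow> real) \<Rightarrow> ('v set \<Rightarrow> real) \<Rightarrow> bool" where
  "proper E \<sigma> \<omega> \<longleftrightarrow> (\<forall>e\<in>E. \<sigma> e * \<omega> e \<ge> 0)"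

definition feasible_D :: "'v set \<Rightarrow> 'v set set \<Rightarrow> ('v set \<Rightarrow> real) \<Rightarrow> ('v set \<Rightarrow> real) \<Rightarrow> bool" where
  "feasible_D V E \<sigma> \<omega> \<longleftrightarrow> psd V (stress_matrix E \<omega>) \<and> proper E \<sigma> \<omega>"

definition optimal_D :: "'v set \<Rightarrow> 'v set set \<Rightarrow> ('v set \<Rightarrow> real) \<Rightarrow> ('v \<Rightarrow> real ^ 'd) \<Rightarrow> ('v set \<Rightarrow> real) \<Rightarrow> bool" where
  "optimal_D V E \<sigma> p \<omega> \<longleftrightarrow> feasible_D V E \<sigma> \<omega> \<and>
     (\<forall>\<omega>'. feasible_D V E \<sigma> \<omega>' \<longrightarrow> objective_D E p \<omega> \<le> objective_D E p \<omega>')"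

definition nbrs :: "'v set \<Rightarrow> 'v set set \<Rightarrow> 'v \<Rightarrow> 'v set" where
  "nbrs V E i = {j \<in> V. {i, j} \<in> E}"

definition equilibrium_stress :: "'v set \<Rightarrow> 'v set set \<Rightarrow> ('v \<Rightarrow> real ^ 'd) \<Rightarrow> ('v set \<Rightarrow> real) \<Rightarrow> bool" where
  "equilibrium_stress V E p \<omega> \<longleftrightarrow>
     (\<forall>i\<in>V. (\<Sum>j\<in>nbrs V E i. \<omega> {i, j} *\<^sub>R (p i - p j)) = 0)"

end

theory Submission
  imports Defs
begin

text \<open>
  With \<open>\<Omega> = \<Sum> \<omega>\<^sub>i\<^sub>j F\<^sub>i\<^sub>j\<close> and \<open>x\<^sub>k\<close> the \<open>k\<close>-th coordinate vector of \<open>p\<close>, the objective of (D) is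
  \<open>\<Sum>\<^sub>k x\<^sub>k\<^sup>T \<Omega> x\<^sub>k\<close>. It is therefore nonnegative on the feasible set and vanishes at the feasible
  weight \<open>\<omega> = 0\<close>, so \<open>\<omega>\<close> is optimal iff it is feasible with objective \<open>0\<close>. For a symmetric positive
  semidefinite \<open>\<Omega>\<close>, \<open>x\<^sup>T \<Omega> x = 0\<close> forces \<open>\<Omega> x = 0\<close> (perturb \<open>x\<close> by \<open>t e\<^sub>i\<close>: the form stays
  nonnegative, so its term linear in \<open>t\<close>, which is \<open>2t (\<Omega> x)\<^sub>i\<close>, must vanish), and the \<open>i\<close>-th
  row of \<open>\<Omega> x\<^sub>k = 0\<close> is the \<open>k\<close>-th coordinate of the equilibrium condition at vertex \<open>i\<close>.
\<close>

definition bilin_form :: "'v set \<Rightarrow> ('v \<Rightarrow> 'v \<Rightarrow> real) \<Rightarrow> ('v \<Rightarrow> real) \<Rightarrow> ('v \<Rightarrow> real) \<Rightarrow> real" where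
  "bilin_form V M x y = (\<Sum>a\<in>V. \<Sum>b\<in>V. x a * M a b * y b)"

definition mat_vec :: "'v set \<Rightarrow> ('v \<Rightarrow> 'v \<Rightarrow> real) \<Rightarrow> ('v \<Rightarrow> real) \<Rightarrow> 'v \<Rightarrow> real" where
  "mat_vec V M y a = (\<Sum>b\<in>V. M a b * y b)"

lemma psd_iff_bilin_form: "psd V M \<longleftrightarrow> (\<forall>x. 0 \<le> bilin_form V M x x)"
  by (simp add: psd_def bilin_form_def)

lemma bilin_form_eq_sum_mat_vec: "bilin_form V M x y = (\<Sum>a\<in>V. x a * mat_vec V M y a)"
  by (simp add: bilin_form_def mat_vec_def sum_distrib_left mult.assoc)

lemma bilin_form_indicator_left:
  assumes "finite V" "i \<in> V"
  shows "bilin_form V M (\<lambda>a. of_bool (a = i)) y = mat_vec V M y i"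
proof -
  have "(\<lambda>a. of_bool (a = i) * mat_vec V M y a) = (\<lambda>a. if a = i then mat_vec V M y a else 0)"
    by auto
  then show ?thesis using assms by (simp add: bilin_form_eq_sum_mat_vec)
qed

lemma bilin_form_commute:
  assumes "\<forall>a\<in>V. \<forall>b\<in>V. M a b = M b a"
  shows "bilin_form V M x y = bilin_form V M y x"
  unfolding bilin_form_def
  by (subst sum.swap) (intro sum.cong refl; simp add: assms ac_simps)

lemma bilin_form_add_scaled:
  "bilin_form V M (\<lambda>a. x a + t * d a) (\<lambda>a. x a + t * d a) =
     bilin_form V M x x + t * (bilin_form V M x d + bilin_form V M d x) + t\<^sup>2 * bilin_form V M d d"
  unfolding bilin_form_def
  by (simp add: algebra_simps power2_eq_square sum.distrib sum_distrib_left)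

lemma bilin_form_sum_matrix:
  "bilin_form V (\<lambda>a b. \<Sum>e\<in>E. \<omega> e * N e a b) x y = (\<Sum>e\<in>E. \<omega> e * bilin_form V (N e) x y)"
proof -
  have "bilin_form V (\<lambda>a b. \<Sum>e\<in>E. \<omega> e * N e a b) x y =
      (\<Sum>a\<in>V. \<Sum>b\<in>V. \<Sum>e\<in>E. \<omega> e * (x a * N e a b * y b))"
    unfolding bilin_form_def sum_distrib_left sum_distrib_right by (simp only: mult_ac)
  also have "\<dots> = (\<Sum>a\<in>V. \<Sum>e\<in>E. \<Sum>b\<in>V. \<omega> e * (x a * N e a b * y b))"
    by (rule sum.cong[OF refl], rule sum.swap)
  also have "\<dots> = (\<Sum>e\<in>E. \<Sum>a\<in>V. \<Sum>b\<in>V. \<omega> e * (x a * N e a b * y b))"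
    by (rule sum.swap)
  also have "\<dots> = (\<Sum>e\<in>E. \<omega> e * bilin_form V (N e) x y)"
    by (simp only: bilin_form_def sum_distrib_left)
  finally show ?thesis .
qed

lemma quadratic_nonneg_imp_linear_coeff_zero:
  fixes S T :: real
  assumes "\<And>t. 0 \<le> 2 * t * S + t\<^sup>2 * T"
  shows "S = 0"
proof -
  define c where "c = \<bar>T\<bar> + 1"
  have c: "c > 0" "T - 2 * c < 0" by (auto simp: c_def)
  have "0 \<le> 2 * (- S / c) * S + (- S / c)\<^sup>2 * T" by (rule assms)
  also have "\<dots> = S\<^sup>2 * (T - 2 * c) / c\<^sup>2"
    using c by (simp add: field_simps power2_eq_square)
  finally have "S\<^sup>2 * (T - 2 * c) \<ge> 0"
    using c by (simp add: zero_le_divide_iff)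
  with c show "S = 0" by (simp add: mult_nonneg_nonpos2 zero_le_mult_iff)
qed

lemma psd_form_eq_zero_imp_mat_vec_zero:
  assumes "finite V" "i \<in> V" and sym: "\<forall>a\<in>V. \<forall>b\<in>V. M a b = M b a"
    and "psd V M" "bilin_form V M x x = 0"
  shows "mat_vec V M x i = 0"
proof -
  let ?d = "\<lambda>a. of_bool (a = i) :: real"
  have "0 \<le> 2 * t * mat_vec V M x i + t\<^sup>2 * bilin_form V M ?d ?d" for t
  proof -
    have "0 \<le> bilin_form V M (\<lambda>a. x a + t * ?d a) (\<lambda>a. x a + t * ?d a)"
      using \<open>psd V M\<close> by (simp add: psd_iff_bilin_form)
    also have "\<dots> = 2 * t * mat_vec V M x i + t\<^sup>2 * bilin_form V M ?d ?d"
      unfolding bilin_form_add_scaled bilin_form_commute[OF sym, of x ?d]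
      using assms by (simp add: bilin_form_indicator_left)
    finally show ?thesis .
  qed
  then show ?thesis by (rule quadratic_nonneg_imp_linear_coeff_zero)
qed

lemma psd_form_eq_zero_iff_mat_vec_zero:
  assumes "finite V" "\<forall>a\<in>V. \<forall>b\<in>V. M a b = M b a" "psd V M"
  shows "bilin_form V M x x = 0 \<longleftrightarrow> (\<forall>i\<in>V. mat_vec V M x i = 0)"
  using assms psd_form_eq_zero_imp_mat_vec_zero[OF assms(1) _ assms(2,3)]
  by (auto simp: bilin_form_eq_sum_mat_vec)

lemma F_commute: "F i j a b = F i j b a"
  unfolding F_def by (rule mult.commute)

lemma bilin_form_F:
  assumes "finite V" "i \<in> V" "j \<in> V"
  shows "bilin_form V (F i j) x y = (x i - x j) * (y i - y j)"
proof -
  let ?\<delta> = "\<lambda>a. (if a = i then 1 else 0) - (if a = j then 1 else 0) :: real"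
  have pair: "(\<Sum>a\<in>V. ?\<delta> a * z a) = z i - z j" for z
  proof -
    have "(\<Sum>a\<in>V. ?\<delta> a * z a) = (\<Sum>a\<in>V. (if a = i then z a else 0) - (if a = j then z a else 0))"
      by (rule sum.cong) auto
    then show ?thesis using assms by (simp add: sum_subtractf)
  qed
  have "bilin_form V (F i j) x y = (\<Sum>a\<in>V. ?\<delta> a * x a) * (\<Sum>b\<in>V. ?\<delta> b * y b)"
    unfolding bilin_form_def F_def sum_product by (simp add: algebra_simps)
  then show ?thesis by (simp only: pair)
qed

lemma ends_doubleton: "ends {i, j} = (i, j) \<or> ends {i, j} = (j, i)"
proof -
  have "(\<lambda>(a, b). {i, j} = {a, b}) (ends {i, j})"
    unfolding ends_def by (rule someI[of _ "(i, j)"]) simp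
  then show ?thesis by (cases "ends {i, j}") (auto simp: doubleton_eq_iff)
qed

lemma ends_edge:
  assumes "simple_graph V E" "e \<in> E"
  shows "e = {fst (ends e), snd (ends e)}" "fst (ends e) \<in> V" "snd (ends e) \<in> V"
proof -
  obtain i j where "e = {i, j}" "i \<in> V" "j \<in> V"
    using assms unfolding simple_graph_def by blast
  then show "e = {fst (ends e), snd (ends e)}" "fst (ends e) \<in> V" "snd (ends e) \<in> V"
    using ends_doubleton[of i j] by auto
qed

lemma sum_edges_at_vertex:
  assumes "simple_graph V E" and "\<And>e. e \<in> E \<Longrightarrow> i \<notin> e \<Longrightarrow> g e = 0"
  shows "(\<Sum>e\<in>E. g e) = (\<Sum>j\<in>nbrs V E i. g {i, j})"
proof -
  have "finite E"
    using assms(1) unfolding simple_graph_def by (auto intro: finite_subset[of _ "Pow V"])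
  then have "(\<Sum>e\<in>E. g e) = (\<Sum>e\<in>{e\<in>E. i \<in> e}. g e)"
    using assms(2) by (intro sum.mono_neutral_right) auto
  also have "{e\<in>E. i \<in> e} = (\<lambda>j. {i, j}) ` nbrs V E i"
  proof (intro equalityI subsetI)
    fix e assume "e \<in> {e\<in>E. i \<in> e}"
    moreover obtain a b where "e = {a, b}" "a \<in> V" "b \<in> V"
      using assms(1) calculation unfolding simple_graph_def by blast
    ultimately show "e \<in> (\<lambda>j. {i, j}) ` nbrs V E i"
      unfolding nbrs_def by (auto simp: image_iff insert_commute)
  qed (auto simp: nbrs_def)
  also have "(\<Sum>e\<in>(\<lambda>j. {i, j}) ` nbrs V E i. g e) = (\<Sum>j\<in>nbrs V E i. g {i, j})"
    by (rule sum.reindex_cong[where l = "\<lambda>j. {i, j}"]) (auto simp: inj_on_def doubleton_eq_iff)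
  finally show ?thesis .
qed

lemma stress_matrix_commute: "stress_matrix E \<omega> a b = stress_matrix E \<omega> b a"
  unfolding stress_matrix_def F_edge_def by (subst F_commute) (rule refl)

lemma bilin_form_stress_matrix:
  assumes "simple_graph V E"
  shows "bilin_form V (stress_matrix E \<omega>) x y =
    (\<Sum>e\<in>E. \<omega> e * ((x (fst (ends e)) - x (snd (ends e))) * (y (fst (ends e)) - y (snd (ends e)))))"
    (is "_ = (\<Sum>e\<in>E. \<omega> e * ?d e)")
proof -
  have "finite V" using assms by (simp add: simple_graph_def)
  have "bilin_form V (stress_matrix E \<omega>) x y = (\<Sum>e\<in>E. \<omega> e * bilin_form V (F_edge e) x y)"
    unfolding stress_matrix_def[abs_def] by (rule bilin_form_sum_matrix)
  also have "\<dots> = (\<Sum>e\<in>E. \<omega> e * ?d e)"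
  proof (rule sum.cong[OF refl])
    fix e assume "e \<in> E"
    then show "\<omega> e * bilin_form V (F_edge e) x y = \<omega> e * ?d e"
      using ends_edge(2,3)[OF assms \<open>e \<in> E\<close>] \<open>finite V\<close> by (simp add: F_edge_def bilin_form_F)
  qed
  finally show ?thesis .
qed

lemma mat_vec_stress_matrix:
  assumes G: "simple_graph V E" and "i \<in> V"
  shows "mat_vec V (stress_matrix E \<omega>) z i = (\<Sum>j\<in>nbrs V E i. \<omega> {i, j} * (z i - z j))"
proof -
  let ?\<delta> = "\<lambda>a. of_bool (a = i) :: real"
  let ?g = "\<lambda>e. \<omega> e * ((?\<delta> (fst (ends e)) - ?\<delta> (snd (ends e))) * (z (fst (ends e)) - z (snd (ends e))))"
  have "finite V" using G by (simp add: simple_graph_def)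
  then have "mat_vec V (stress_matrix E \<omega>) z i = bilin_form V (stress_matrix E \<omega>) ?\<delta> z"
    using \<open>i \<in> V\<close> by (simp add: bilin_form_indicator_left)
  also have "\<dots> = (\<Sum>e\<in>E. ?g e)"
    by (rule bilin_form_stress_matrix[OF G])
  also have "\<dots> = (\<Sum>j\<in>nbrs V E i. ?g {i, j})"
  proof (rule sum_edges_at_vertex[OF G])
    fix e assume "e \<in> E" "i \<notin> e"
    then have "fst (ends e) \<noteq> i" "snd (ends e) \<noteq> i"
      using ends_edge(1)[OF G \<open>e \<in> E\<close>] by (metis insertCI)+
    then show "?g e = 0" by simp
  qed
  also have "\<dots> = (\<Sum>j\<in>nbrs V E i. \<omega> {i, j} * (z i - z j))"
  proof (rule sum.cong[OF refl])
    fix j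
    show "?g {i, j} = \<omega> {i, j} * (z i - z j)"
      using ends_doubleton[of i j] by (cases "i = j") (auto simp: algebra_simps)
  qed
  finally show ?thesis .
qed

lemma objective_D_eq_sum_bilin_form:
  assumes "simple_graph V E"
  shows "objective_D E p \<omega> = (\<Sum>k\<in>UNIV. bilin_form V (stress_matrix E \<omega>) (\<lambda>v. p v $ k) (\<lambda>v. p v $ k))"
proof -
  have norm_sq: "(norm (v :: real ^ 'd))\<^sup>2 = (\<Sum>k\<in>UNIV. (v $ k)\<^sup>2)" for v
    unfolding power2_norm_eq_inner inner_vec_def by (simp add: power2_eq_square)
  have "objective_D E p \<omega> =
      (\<Sum>e\<in>E. \<Sum>k\<in>UNIV. \<omega> e * ((p (fst (ends e)) $ k - p (snd (ends e)) $ k) * (p (fst (ends e)) $ k - p (snd (ends e)) $ k)))"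
    unfolding objective_D_def norm_sq by (simp add: sum_distrib_left power2_eq_square)
  also have "\<dots> = (\<Sum>k\<in>UNIV. bilin_form V (stress_matrix E \<omega>) (\<lambda>v. p v $ k) (\<lambda>v. p v $ k))"
    unfolding bilin_form_stress_matrix[OF assms] by (rule sum.swap)
  finally show ?thesis .
qed

lemma equilibrium_stress_iff_mat_vec:
  assumes "simple_graph V E"
  shows "equilibrium_stress V E p \<omega> \<longleftrightarrow> (\<forall>k. \<forall>i\<in>V. mat_vec V (stress_matrix E \<omega>) (\<lambda>v. p v $ k) i = 0)"
  unfolding equilibrium_stress_def vec_eq_iff
  by (auto simp: mat_vec_stress_matrix[OF assms] sum_component)

lemma objective_D_nonneg:
  assumes "simple_graph V E" "psd V (stress_matrix E \<omega>)"
  shows "0 \<le> objective_D E p \<omega>"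
  using assms(2) unfolding objective_D_eq_sum_bilin_form[OF assms(1)] psd_iff_bilin_form
  by (simp add: sum_nonneg)

lemma objective_D_eq_zero_iff_equilibrium_stress:
  assumes G: "simple_graph V E" and psd: "psd V (stress_matrix E \<omega>)"
  shows "objective_D E p \<omega> = 0 \<longleftrightarrow> equilibrium_stress V E p \<omega>"
proof -
  let ?Q = "\<lambda>k. bilin_form V (stress_matrix E \<omega>) (\<lambda>v. p v $ k) (\<lambda>v. p v $ k)"
  have "finite V" using G by (simp add: simple_graph_def)
  have sym: "\<forall>a\<in>V. \<forall>b\<in>V. stress_matrix E \<omega> a b = stress_matrix E \<omega> b a"
    by (intro ballI) (rule stress_matrix_commute)
  have "objective_D E p \<omega> = 0 \<longleftrightarrow> (\<forall>k. ?Q k = 0)"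
    using psd unfolding objective_D_eq_sum_bilin_form[OF G] psd_iff_bilin_form
    by (simp add: sum_nonneg_eq_0_iff)
  also have "\<dots> \<longleftrightarrow> (\<forall>k. \<forall>i\<in>V. mat_vec V (stress_matrix E \<omega>) (\<lambda>v. p v $ k) i = 0)"
    using psd_form_eq_zero_iff_mat_vec_zero[OF \<open>finite V\<close> sym psd] by simp
  also have "\<dots> \<longleftrightarrow> equilibrium_stress V E p \<omega>"
    by (rule equilibrium_stress_iff_mat_vec[OF G, symmetric])
  finally show ?thesis .
qed

lemma optimal_D_iff_objective_D_eq_zero:
  assumes "simple_graph V E"
  shows "optimal_D V E \<sigma> p \<omega> \<longleftrightarrow> feasible_D V E \<sigma> \<omega> \<and> objective_D E p \<omega> = 0"
proof -
  have nonneg: "0 \<le> objective_D E p \<omega>'" if "feasible_D V E \<sigma> \<omega>'" for \<omega>'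
    using that unfolding feasible_D_def by (blast intro: objective_D_nonneg[OF assms])
  have "feasible_D V E \<sigma> (\<lambda>_. 0)"
    by (simp add: feasible_D_def psd_def proper_def stress_matrix_def)
  moreover have "objective_D E p (\<lambda>_. 0) = 0"
    by (simp add: objective_D_def)
  ultimately have "optimal_D V E \<sigma> p \<omega> \<Longrightarrow> objective_D E p \<omega> \<le> 0"
    unfolding optimal_D_def by metis
  then show ?thesis
    unfolding optimal_D_def using nonneg by force
qed

theorem proposition2p2:
  fixes V :: "'v set" and E :: "'v set set" and \<sigma> \<omega> :: "'v set \<Rightarrow> real"
    and p :: "'v \<Rightarrow> real ^ 'd"
  assumes "tensegrity V E \<sigma> p"
  shows "optimal_D V E \<sigma> p \<omega> \<longleftrightarrow>
           (equilibrium_stress V E p \<omega> \<and> proper E \<sigma> \<omega> \<and> psd V (stress_matrix E \<omega>))"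
proof -
  have G: "simple_graph V E" using assms by (simp add: tensegrity_def)
  show ?thesis
    unfolding optimal_D_iff_objective_D_eq_zero[OF G] feasible_D_def
    using objective_D_eq_zero_iff_equilibrium_stress[OF G, of \<omega> p] by blast
qed

end
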